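(* Under the hypotheses of the setting below (with $\tilde G$ obtained from $G$ by the update procedure), define the trisection $O=\{i\in E:\sum_{i'\in E}\tilde G_{ii'}>|E|/2\}$, $I=\{i\in E:\sum_{i'\in E}\tilde G_{i'i}>|E|/2\}$, $P=E\setminus(O\cup I)$, and let $\bar i\in E$ be the median of $E$ w.r.t. $\pi$, i.e. $|\{i'\in E:\pi(i')\le\pi(\bar i)\}|=\lceil|E|/2\rceil$. Then with probability at least $1-\frac{|Q|\delta}{12\lceil\log_2(n\vee d)\rceil d}$, \[ \pi(i_O)<\pi(\bar i)<\pi(i_I)\qquad\text{for all } i_O\in O,\ i_I\in I . \]
   Context: Setting: $\pi\in\mathcal S_n$, $\eta\in\mathcal S_d$, $M\in[0,1]^{n\times d}$ with $(M_{\pi^{-1}(i)\eta^{-1}(j)})_{ij}$ non-increasing along rows and columns; $p\in[0,1]$, $h\in(0,1]$, $\sigma>0$, $\delta\in(0,1)$. $\tilde Y^{(a)},\tilde Y^{(b)}$ are independent, each generated as: $N_{ij}$ i.i.d. $\mathrm{Poisson}(\mu)$, independent $\tilde Y_{i,j,k}=M_{ij}+W_{ijk}$ with $W_{ijk}$ independent centered $\sigma^2$-subGaussian ($\mathbb{E}e^{tW}\le e^{t^2\sigma^2/2}$), $\tilde Y_{ij}=\frac1{N_{ij}}\sum_{k\le N_{ij}}\tilde Y_{i,j,k}$ ($0/0=0$); $\lambda_1=1-e^{-\mu}$. $L=\log\big(24\,nd\,(n\vee d)^{1/2}\lceil\log_2(n\vee d)\rceil/\delta\big)$, $\rho=(1\vee\sigma)e\sqrt{8L}$,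 $\gamma=2L/(\lambda_1e^2)$. $E\subseteq[n]$, $Q\subseteq[d]$, $G\in\{0,1\}^{n\times n}$ satisfy: $Q^*(E):=\{j:\max_{i\in E}M_{ij}\ge p+h,\ \min_{i\in E}M_{ij}\le p-h\}\subseteq Q$; $\lambda_1(|E|\wedge|Q|)\ge4\rho^2/h^2$; $G_{ii'}=1\Rightarrow\pi(i)<\pi(i')$ for $i,i'\in E$. Update procedure: $\bar y(j)=\frac1{|E|}\sum_{i\in E}\tilde Y^{(a)}_{ij}$, $\tau=2\rho\sqrt{\lambda_1/|E|}$; for $j\in Q$, $c\in\{2,\dots,\lceil\sqrt{\lambda_1|E|}/(2\rho)+1\rceil\}$: $A_j=\{j'\in Q:|\bar y(j')-\bar y(j)|\le\tau\}$, $Q^l_j(c)=\{j'\in Q:\tau<\bar y(j')-\bar y(j)\le c\tau\}$, $Q^r_j(c)=\{j'\in Q:\tau<\bar y(j)-\bar y(j')\le c\tau\}$; $\mathcal Q$ = all these sets together with $Q$, keeping only those of size $\ge\gamma$. Starting from $\tilde G=G$, for every $Q'\in\mathcal Q$ and $i,i'\in E$, set $\tilde G_{ii'}=1$ if $\frac1{|Q'|}\sum_{j\in Q'}(\tilde Y^{(b)}_{ij}-\tilde Y^{(b)}_{i'j})>2\rho\sqrt{\lambda_1/|Q'|}$. *)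

theory Defs
  imports "HOL-Probability.Probability"
begin

text \<open>For each copy c (True = (a), False = (b)), row i, column j:
  the count N c i j and the noise variables W c i j k (k = 0,1,2,...; only k < N c i j
  are used).\<close>

definition obs :: "(nat \<Rightarrow> nat \<Rightarrow> real) \<Rightarrow> nat \<Rightarrow> (nat \<Rightarrow> real) \<Rightarrow> nat \<Rightarrow> nat \<Rightarrow> real" where
  "obs M N W i j = (if N = 0 then 0 else (1 / real N) * (\<Sum>k<N. M i j + W k))"

definition lam1 :: "real \<Rightarrow> real" where
  "lam1 \<mu> = 1 - exp (- \<mu>)"

definition Lconst :: "nat \<Rightarrow> nat \<Rightarrow> real \<Rightarrow> real" where
  "Lconst n d \<delta> = ln (24 * real n * real d * sqrt (real (max n d))
       * real_of_int \<lceil>log 2 (real (max n d))\<rceil> / \<delta>)"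

definition rho :: "real \<Rightarrow> real \<Rightarrow> real" where
  "rho \<sigma> L = max 1 \<sigma> * exp 1 * sqrt (8 * L)"

definition gam :: "real \<Rightarrow> real \<Rightarrow> real" where
  "gam L l1 = 2 * L / (l1 * (exp 1)\<^sup>2)"

definition Qstar :: "(nat \<Rightarrow> nat \<Rightarrow> real) \<Rightarrow> nat \<Rightarrow> real \<Rightarrow> real \<Rightarrow> nat set \<Rightarrow> nat set" where
  "Qstar M d p h E = {j. j < d \<and> Max ((\<lambda>i. M i j) ` E) \<ge> p + h \<and> Min ((\<lambda>i. M i j) ` E) \<le> p - h}"

definition ybar :: "(nat \<Rightarrow> nat \<Rightarrow> real) \<Rightarrow> nat set \<Rightarrow> nat \<Rightarrow> real" where
  "ybar ya E j = (1 / real (card E)) * (\<Sum>i\<in>E. ya i j)"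

definition tau :: "real \<Rightarrow> real \<Rightarrow> nat set \<Rightarrow> real" where
  "tau \<rho> l1 E = 2 * \<rho> * sqrt (l1 / real (card E))"

definition cmax :: "real \<Rightarrow> real \<Rightarrow> nat set \<Rightarrow> int" where
  "cmax \<rho> l1 E = \<lceil>sqrt (l1 * real (card E)) / (2 * \<rho>) + 1\<rceil>"

definition Aset :: "(nat \<Rightarrow> nat \<Rightarrow> real) \<Rightarrow> real \<Rightarrow> real \<Rightarrow> nat set \<Rightarrow> nat set \<Rightarrow> nat \<Rightarrow> nat set" where
  "Aset ya \<rho> l1 E Q j = {j'\<in>Q. \<bar>ybar ya E j' - ybar ya E j\<bar> \<le> tau \<rho> l1 E}"

definition Qleft :: "(nat \<Rightarrow> nat \<Rightarrow> real) \<Rightarrow> real \<Rightarrow> real \<Rightarrow> nat set \<Rightarrow> nat set \<Rightarrow> nat \<Rightarrow> int \<Rightarrow> nat set" where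
  "Qleft ya \<rho> l1 E Q j c = {j'\<in>Q. tau \<rho> l1 E < ybar ya E j' - ybar ya E j
       \<and> ybar ya E j' - ybar ya E j \<le> real_of_int c * tau \<rho> l1 E}"

definition Qright :: "(nat \<Rightarrow> nat \<Rightarrow> real) \<Rightarrow> real \<Rightarrow> real \<Rightarrow> nat set \<Rightarrow> nat set \<Rightarrow> nat \<Rightarrow> int \<Rightarrow> nat set" where
  "Qright ya \<rho> l1 E Q j c = {j'\<in>Q. tau \<rho> l1 E < ybar ya E j - ybar ya E j'
       \<and> ybar ya E j - ybar ya E j' \<le> real_of_int c * tau \<rho> l1 E}"

definition Qfam :: "(nat \<Rightarrow> nat \<Rightarrow> real) \<Rightarrow> real \<Rightarrow> real \<Rightarrow> real \<Rightarrow> nat set \<Rightarrow> nat set \<Rightarrow> nat set set" where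
  "Qfam ya \<rho> l1 \<gamma> E Q =
     {Q' \<in> {Q} \<union> (Aset ya \<rho> l1 E Q ` Q)
             \<union> {Qleft ya \<rho> l1 E Q j c | j c. j \<in> Q \<and> c \<in> {2..cmax \<rho> l1 E}}
             \<union> {Qright ya \<rho> l1 E Q j c | j c. j \<in> Q \<and> c \<in> {2..cmax \<rho> l1 E}}.
      real (card Q') \<ge> \<gamma>}"

definition Gupd :: "(nat \<Rightarrow> nat \<Rightarrow> real) \<Rightarrow> (nat \<Rightarrow> nat \<Rightarrow> real) \<Rightarrow> real \<Rightarrow> real \<Rightarrow> real
    \<Rightarrow> nat set \<Rightarrow> nat set \<Rightarrow> (nat \<Rightarrow> nat \<Rightarrow> bool) \<Rightarrow> nat \<Rightarrow> nat \<Rightarrow> bool" where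
  "Gupd ya yb \<rho> l1 \<gamma> E Q G i i' =
     (G i i' \<or> (i \<in> E \<and> i' \<in> E \<and> (\<exists>Q' \<in> Qfam ya \<rho> l1 \<gamma> E Q.
         (1 / real (card Q')) * (\<Sum>j\<in>Q'. yb i j - yb i' j) > 2 * \<rho> * sqrt (l1 / real (card Q')))))"

definition Oset :: "(nat \<Rightarrow> nat \<Rightarrow> bool) \<Rightarrow> nat set \<Rightarrow> nat set" where
  "Oset Gt E = {i\<in>E. real (card {i'\<in>E. Gt i i'}) > real (card E) / 2}"

definition Iset :: "(nat \<Rightarrow> nat \<Rightarrow> bool) \<Rightarrow> nat set \<Rightarrow> nat set" where
  "Iset Gt E = {i\<in>E. real (card {i'\<in>E. Gt i' i}) > real (card E) / 2}"

definition subGaussian :: "'a measure \<Rightarrow> real \<Rightarrow> ('a \<Rightarrow> real) \<Rightarrow> bool" where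
  "subGaussian P \<sigma> X \<longleftrightarrow> integrable P X \<and> (\<integral>\<omega>. X \<omega> \<partial>P) = 0 \<and>
     (\<forall>t::real. integrable P (\<lambda>\<omega>. exp (t * X \<omega>)) \<and>
        (\<integral>\<omega>. exp (t * X \<omega>) \<partial>P) \<le> exp (t\<^sup>2 * \<sigma>\<^sup>2 / 2))"

end

theory Submission
  imports Defs
begin

text \<open>
  Call the updated graph consistent if each of its edges \<open>i \<rightarrow> i'\<close> inside \<open>E\<close> has
  \<open>\<pi> i < \<pi> i'\<close>. For a consistent graph, a row with more than \<open>|E|/2\<close> out-edges has more
  than \<open>|E|/2\<close> rows of \<open>E\<close> ranked after it and so precedes the median; symmetrically for
  in-edges. The update can add an inconsistent edge only if, for some misordered pair \<open>(i, i')\<close>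
  and some column set \<open>S\<close>, the copy-(a) data select \<open>S\<close> and the copy-(b) statistic
  \<open>\<Sum>j\<in>S. Y i j - Y i' j\<close>, a sum of terms with non-positive mean, exceeds
  \<open>2 \<rho> sqrt (\<lambda>\<^sub>1 |S|)\<close>. The selection depends only on copy (a), which is independent
  of copy (b); a Chernoff bound with the mixture estimate
  \<open>E exp (t Y) \<le> 1 + \<lambda>\<^sub>1 (exp (t M + t\<^sup>2 \<sigma>\<^sup>2 / 2) - 1)\<close> bounds the joint probability by
  \<open>exp (-3 L)\<close> times the probability of selection. There are at most \<open>n\<^sup>2\<close> pairs, and on
  every outcome at most \<open>6 n |Q|\<close> sets are selected, which gives the bound.
\<close>

section \<open>Elementary estimates\<close>

lemma exp_minus_le_quadratic:
  fixes z :: real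
  assumes "0 \<le> z"
  shows "exp (- z) \<le> 1 - z + z\<^sup>2"
proof -
  have "1 \<le> (1 + z) * (1 - z + z\<^sup>2)"
    using assms by (simp add: algebra_simps power2_eq_square)
  also have "\<dots> \<le> exp z * (1 - z + z\<^sup>2)"
  proof (rule mult_right_mono[OF exp_ge_add_one_self])
    have "0 \<le> (z - 1/2)\<^sup>2 + 3/4" by simp
    then show "0 \<le> 1 - z + z\<^sup>2" by (simp add: power2_eq_square algebra_simps)
  qed
  finally show ?thesis by (simp add: exp_minus field_simps)
qed

lemma mgf_pair_le:
  fixes s x \<sigma> a b :: real
  assumes s: "0 \<le> s" "s \<le> x" "s * \<sigma> \<le> x" and x: "x \<le> 1" and \<sigma>: "0 \<le> \<sigma>"
    and ab: "0 \<le> a" "a \<le> b" "b \<le> 1"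
  shows "exp (s\<^sup>2 * \<sigma>\<^sup>2 / 2) * (exp (s * a) + exp (- (s * b))) \<le> 2 + 6 * x\<^sup>2"
proof -
  have sa: "0 \<le> s * a" "s * a \<le> x"
    using s ab by (auto intro: order_trans[OF mult_left_le])
  have x2: "(s * a)\<^sup>2 \<le> x\<^sup>2" "x\<^sup>2 \<le> 1"
    using sa x by (auto intro: power_mono simp: power_le_one)
  have "exp (- (s * b)) \<le> exp (- (s * a))"
    using s ab by (simp add: mult_left_mono)
  also have "\<dots> \<le> 1 - s * a + (s * a)\<^sup>2"
    using sa by (intro exp_minus_le_quadratic)
  finally have "exp (s * a) + exp (- (s * b)) \<le> 2 + 2 * x\<^sup>2"
    using exp_bound[of "s * a"] sa x x2 by linarith
  moreover have "exp (s\<^sup>2 * \<sigma>\<^sup>2 / 2) \<le> 1 + x\<^sup>2"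
  proof -
    define q where "q = s\<^sup>2 * \<sigma>\<^sup>2 / 2"
    have "(s * \<sigma>)\<^sup>2 \<le> x\<^sup>2"
      using s \<sigma> by (intro power_mono) auto
    then have q: "0 \<le> q" "q \<le> x\<^sup>2 / 2"
      by (auto simp: q_def power_mult_distrib)
    then have "q\<^sup>2 \<le> q"
      using x2 by (simp add: power2_eq_square mult_left_le)
    then show ?thesis
      using exp_bound[of q] q x2 unfolding q_def by linarith
  qed
  ultimately have "exp (s\<^sup>2 * \<sigma>\<^sup>2 / 2) * (exp (s * a) + exp (- (s * b))) \<le> (1 + x\<^sup>2) * (2 + 2 * x\<^sup>2)"
    by (intro mult_mono) auto
  also have "\<dots> \<le> 2 + 6 * x\<^sup>2"
  proof -
    have "x\<^sup>2 * x\<^sup>2 \<le> x\<^sup>2" by (rule mult_left_le[OF x2(2)]) simp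
    then show ?thesis by (simp add: algebra_simps power2_eq_square)
  qed
  finally show ?thesis .
qed

lemma mixture_mgf_nonneg:
  fixes l z :: real
  assumes "0 \<le> l" "l \<le> 1" "0 \<le> z"
  shows "0 \<le> 1 + l * (z - 1)"
proof -
  have "0 \<le> l * z" using assms by simp
  moreover have "l * (z - 1) = l * z - l" by (simp add: algebra_simps)
  ultimately show ?thesis using assms by linarith
qed

lemma mixture_mgf_pair_le:
  fixes l s x \<sigma> a b :: real
  assumes l: "0 \<le> l" "l \<le> 1"
    and s: "0 \<le> s" "s \<le> x" "s * \<sigma> \<le> x" and x: "x \<le> 1" and \<sigma>: "0 \<le> \<sigma>"
    and ab: "0 \<le> a" "a \<le> b" "b \<le> 1"
  shows "(1 + l * (exp (s * a + s\<^sup>2 * \<sigma>\<^sup>2 / 2) - 1)) * (1 + l * (exp ((- s) * b + (- s)\<^sup>2 * \<sigma>\<^sup>2 / 2) - 1))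
    \<le> exp (l * (6 * x\<^sup>2))"
proof -
  have factor: "0 \<le> 1 + l * (z - 1)" "1 + l * (z - 1) \<le> exp (l * (z - 1))" if "0 \<le> z" for z :: real
    using mixture_mgf_nonneg[OF l that] exp_ge_add_one_self by auto
  define e where "e = exp (s\<^sup>2 * \<sigma>\<^sup>2 / 2)"
  have "(1 + l * (exp (s * a + s\<^sup>2 * \<sigma>\<^sup>2 / 2) - 1)) * (1 + l * (exp ((- s) * b + (- s)\<^sup>2 * \<sigma>\<^sup>2 / 2) - 1))
      \<le> exp (l * (exp (s * a + s\<^sup>2 * \<sigma>\<^sup>2 / 2) - 1)) * exp (l * (exp ((- s) * b + (- s)\<^sup>2 * \<sigma>\<^sup>2 / 2) - 1))"
    by (intro mult_mono factor) auto
  also have "\<dots> = exp (l * (e * (exp (s * a) + exp (- (s * b))) - 2))"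
    by (simp add: e_def exp_add[symmetric] algebra_simps)
  also have "\<dots> \<le> exp (l * (6 * x\<^sup>2))"
    using mgf_pair_le[OF s x \<sigma> ab] l unfolding e_def[symmetric] by (simp add: mult_left_mono)
  finally show ?thesis .
qed

lemma prod_mixture_mgf_le:
  fixes l s x \<sigma> :: real and a b :: "'i \<Rightarrow> real"
  assumes l: "0 \<le> l" "l \<le> 1"
    and s: "0 \<le> s" "s \<le> x" "s * \<sigma> \<le> x" and x: "x \<le> 1" and \<sigma>: "0 \<le> \<sigma>"
    and ab: "\<And>j. j \<in> S \<Longrightarrow> 0 \<le> a j \<and> a j \<le> b j \<and> b j \<le> 1"
  shows "(\<Prod>j\<in>S. ennreal (1 + l * (exp (s * a j + s\<^sup>2 * \<sigma>\<^sup>2 / 2) - 1))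
      * ennreal (1 + l * (exp ((- s) * b j + (- s)\<^sup>2 * \<sigma>\<^sup>2 / 2) - 1)))
    \<le> ennreal (exp (6 * x\<^sup>2 * (l * real (card S))))"
proof -
  have "(\<Prod>j\<in>S. ennreal (1 + l * (exp (s * a j + s\<^sup>2 * \<sigma>\<^sup>2 / 2) - 1))
      * ennreal (1 + l * (exp ((- s) * b j + (- s)\<^sup>2 * \<sigma>\<^sup>2 / 2) - 1)))
      = ennreal (\<Prod>j\<in>S. (1 + l * (exp (s * a j + s\<^sup>2 * \<sigma>\<^sup>2 / 2) - 1))
      * (1 + l * (exp ((- s) * b j + (- s)\<^sup>2 * \<sigma>\<^sup>2 / 2) - 1)))"
    using mixture_mgf_nonneg[OF l] by (simp add: prod_ennreal[symmetric] ennreal_mult)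
  also have "\<dots> \<le> ennreal (\<Prod>j\<in>S. exp (l * (6 * x\<^sup>2)))"
    using ab mixture_mgf_pair_le[OF l s x \<sigma>] mixture_mgf_nonneg[OF l]
    by (intro ennreal_leI prod_mono) auto
  also have "\<dots> = ennreal (exp (6 * x\<^sup>2 * (l * real (card S))))"
    by (simp add: exp_of_nat_mult[symmetric] algebra_simps del: exp_of_nat_mult)
  finally show ?thesis .
qed

lemma exp_1_numeric_bounds: "14 \<le> 2 * exp 1 * sqrt (8::real)" "(exp 1)\<^sup>2 \<le> (7.4::real)"
proof -
  have e: "5/2 \<le> exp (1::real)" "exp (1::real) \<le> 272/100"
    using e_approx_32 e_less_272 by (auto simp: abs_if split: if_split_asm)
  have "28/10 \<le> sqrt (8::real)"
    by (rule real_le_rsqrt) (simp add: power2_eq_square)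
  then have "14 \<le> 2 * (5/2) * sqrt (8::real)"
    by simp
  also have "\<dots> \<le> 2 * exp 1 * sqrt 8"
    using e by (intro mult_right_mono) auto
  finally show "14 \<le> 2 * exp 1 * sqrt (8::real)" .
  have "(exp 1)\<^sup>2 \<le> (272/100::real)\<^sup>2"
    using e by (intro power_mono) auto
  then show "(exp 1)\<^sup>2 \<le> (7.4::real)"
    by (simp add: power2_eq_square)
qed

lemma chernoff_exponent_choice:
  fixes L u :: real
  assumes L: "0 < L" and u: "2 * L / (exp 1)\<^sup>2 \<le> u"
  obtains x where "0 < x" "x \<le> 1" "6 * x\<^sup>2 * u - 2 * exp 1 * sqrt (8 * L) * x * sqrt u \<le> - 3 * L"
proof -
  have "2 * L / 7.4 \<le> 2 * L / (exp 1)\<^sup>2"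
    using L exp_1_numeric_bounds(2) by (intro divide_left_mono) auto
  then have uL: "2 * L / 7.4 \<le> u" using u by linarith
  then have up: "0 < u" using L by simp
  have rw: "2 * exp 1 * sqrt (8 * L) * x * sqrt u = (2 * exp 1 * sqrt 8) * (x * (sqrt L * sqrt u))" for x
    by (simp add: real_sqrt_mult)
  \<comment> \<open>The balancing choice \<open>x = \<surd>(L/u)\<close> is admissible when \<open>L \<le> u\<close>; otherwise \<open>x = 1\<close> suffices.\<close>
  show ?thesis
  proof (cases "L \<le> u")
    case True
    define x where "x = sqrt (L / u)"
    have "x\<^sup>2 * u = L" "x * (sqrt L * sqrt u) = L"
      using L up by (simp_all add: x_def real_sqrt_divide power_divide)
    moreover have "14 * L \<le> (2 * exp 1 * sqrt 8) * L"
      using exp_1_numeric_bounds(1) L by (intro mult_right_mono) auto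
    ultimately have "6 * x\<^sup>2 * u - 2 * exp 1 * sqrt (8 * L) * x * sqrt u \<le> - 3 * L"
      unfolding rw using L by (simp add: mult.assoc)
    moreover have "0 < x" "x \<le> 1" using L up True by (auto simp: x_def)
    ultimately show ?thesis using that by blast
  next
    case False
    have Lu: "u \<le> sqrt L * sqrt u"
      using False up mult_right_mono[of "sqrt u" "sqrt L" "sqrt u"] by simp
    have "9 * L \<le> 64 * u" using L uL by simp
    then have "(3 * L)\<^sup>2 \<le> 64 * (L * u)"
      using L by (simp add: power2_eq_square mult_left_mono)
    also have "\<dots> = (8 * (sqrt L * sqrt u))\<^sup>2"
      using L up by (simp add: power_mult_distrib)
    finally have "(3 * L)\<^sup>2 \<le> (8 * (sqrt L * sqrt u))\<^sup>2" .
    then have "3 * L \<le> 8 * (sqrt L * sqrt u)"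
      by (rule power2_le_imp_le) (use L up in simp)
    moreover have "14 * (sqrt L * sqrt u) \<le> (2 * exp 1 * sqrt 8) * (sqrt L * sqrt u)"
      using exp_1_numeric_bounds(1) L up by (intro mult_right_mono) auto
    ultimately have "6 * u - (2 * exp 1 * sqrt 8) * (sqrt L * sqrt u) \<le> - 3 * L"
      using Lu by linarith
    then show ?thesis using that[of 1] unfolding rw by simp
  qed
qed

lemma union_bound_arith:
  fixes a b c s \<delta> q x y :: real
  assumes ge1: "1 \<le> a" "1 \<le> b" "1 \<le> c" "1 \<le> s" and \<delta>: "0 < \<delta>" "\<delta> \<le> 1"
    and x: "0 \<le> x" "x \<le> a\<^sup>2" and y: "0 \<le> y" "y \<le> 6 * a * q"
  shows "x * exp (- 3 * ln (24 * a * b * s * c / \<delta>)) * y \<le> q * \<delta> / (12 * c * b)"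
proof -
  define r where "r = \<delta> / (24 * a * b * s * c)"
  have r: "0 < r" using ge1 \<delta> by (simp add: r_def)
  have q: "0 \<le> q" using y ge1 zero_le_mult_iff[of "6 * a" q] by linarith
  have "exp (- 3 * ln (24 * a * b * s * c / \<delta>)) = exp (ln r) ^ 3"
    using ge1 \<delta> by (simp add: r_def ln_div exp_of_nat_mult[symmetric] algebra_simps)
  also have "\<dots> = r ^ 3" using r by simp
  finally have "x * exp (- 3 * ln (24 * a * b * s * c / \<delta>)) * y \<le> a\<^sup>2 * r ^ 3 * (6 * a * q)"
    using x y r by (simp add: mult_mono)
  also have "\<dots> = 6 * q * (a * r) ^ 3" by (simp add: algebra_simps power2_eq_square power3_eq_cube)
  also have "\<dots> \<le> 6 * q * ((a * r) * (1 / 24)\<^sup>2)"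
  proof -
    have ar: "0 < a * r" "a * r \<le> 1 / 24"
      using ge1 \<delta> r mult_mono[of 1 b 1 "s * c"] mult_mono[of 1 s 1 c]
      by (auto simp: r_def field_simps)
    then have "(a * r) * (a * r)\<^sup>2 \<le> (a * r) * (1 / 24)\<^sup>2" by (intro mult_left_mono power_mono) auto
    then show ?thesis
      using q by (intro mult_left_mono) (auto simp: power3_eq_cube power2_eq_square)
  qed
  also have "\<dots> = q * \<delta> / (12 * c * b * (192 * s))"
    using ge1 by (simp add: r_def field_simps power2_eq_square)
  also have "\<dots> \<le> q * \<delta> / (12 * c * b)"
    using ge1 \<delta> q by (intro divide_left_mono) auto
  finally show ?thesis .
qed

lemma normalized_test_iff:
  fixes c l x :: real
  assumes "0 < k"
  shows "c * sqrt (l / real k) < (1 / real k) * x \<longleftrightarrow> c * sqrt (l * real k) < x"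
proof -
  have "sqrt (l * real k) = sqrt (l / real k * (real k)\<^sup>2)"
    using assms by (simp add: power2_eq_square)
  also have "\<dots> = sqrt (l / real k) * real k"
    by (simp only: real_sqrt_mult real_sqrt_abs abs_of_nat)
  finally have eq: "c * sqrt (l * real k) = real k * (c * sqrt (l / real k))"
    by simp
  show ?thesis
    unfolding eq using assms by (simp add: pos_less_divide_eq mult.commute)
qed

lemma ceiling_log2_ge_1: "2 \<le> k \<Longrightarrow> 1 \<le> real_of_int \<lceil>log 2 (real k)\<rceil>"
  by (simp add: le_ceiling_iff le_log_iff)

lemma Lconst_ge_1:
  assumes "1 \<le> n" "1 \<le> d" "2 \<le> max n d" "0 < \<delta>" "\<delta> < 1"
  shows "1 \<le> Lconst n d \<delta>"
proof -
  have c: "1 \<le> real_of_int \<lceil>log 2 (real (max n d))\<rceil>"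
    using assms(3) by (rule ceiling_log2_ge_1)
  have s: "1 \<le> sqrt (real (max n d))"
    using assms(3) by simp
  define X where "X = real n * real d * sqrt (real (max n d)) * real_of_int \<lceil>log 2 (real (max n d))\<rceil>"
  have "1 * 1 * 1 * 1 \<le> X"
    unfolding X_def using assms c s by (intro mult_mono) auto
  moreover have "exp 1 * \<delta> \<le> exp 1"
    using assms(4,5) by simp
  ultimately have "exp 1 * \<delta> \<le> 24 * X"
    using e_less_272 by linarith
  then have "exp 1 \<le> 24 * X / \<delta>"
    using assms(4) by (simp add: le_divide_eq)
  then show ?thesis
    unfolding Lconst_def X_def by (subst ln_ge_iff) (auto simp: mult.assoc intro: less_le_trans[OF exp_gt_zero])
qed

lemma rho_ge_1:
  assumes "1 \<le> L"
  shows "1 \<le> rho \<sigma> L"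
proof -
  have "1 * 1 * 1 \<le> max 1 \<sigma> * exp 1 * sqrt (8 * L)"
    using assms by (intro mult_mono) auto
  then show ?thesis by (simp add: rho_def)
qed

section \<open>Combinatorics of the update\<close>

lemma mem_Qfam_iff:
  "S \<in> Qfam y \<rho> l1 \<gamma> E Q \<longleftrightarrow> \<gamma> \<le> real (card S) \<and>
    (S = Q \<or> (\<exists>j\<in>Q. S = Aset y \<rho> l1 E Q j) \<or>
     (\<exists>j\<in>Q. \<exists>c\<in>{2..cmax \<rho> l1 E}. S = Qleft y \<rho> l1 E Q j c) \<or>
     (\<exists>j\<in>Q. \<exists>c\<in>{2..cmax \<rho> l1 E}. S = Qright y \<rho> l1 E Q j c))"
  unfolding Qfam_def by blast

lemma Qfam_subset: "S \<in> Qfam y \<rho> l1 \<gamma> E Q \<Longrightarrow> S \<subseteq> Q"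
  unfolding mem_Qfam_iff Aset_def Qleft_def Qright_def by auto

lemma Qfam_cong:
  assumes "\<And>i j. i \<in> E \<Longrightarrow> j \<in> Q \<Longrightarrow> y i j = y' i j"
  shows "Qfam y \<rho> l1 \<gamma> E Q = Qfam y' \<rho> l1 \<gamma> E Q"
proof -
  have "ybar y E j = ybar y' E j" if "j \<in> Q" for j
    using assms that by (simp add: ybar_def)
  then have "Aset y \<rho> l1 E Q j = Aset y' \<rho> l1 E Q j"
    "Qleft y \<rho> l1 E Q j c = Qleft y' \<rho> l1 E Q j c"
    "Qright y \<rho> l1 E Q j c = Qright y' \<rho> l1 E Q j c" if "j \<in> Q" for j c
    using that by (auto simp: Aset_def Qleft_def Qright_def)
  then show ?thesis
    by (intro set_eqI) (auto simp: mem_Qfam_iff)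
qed

lemma card_Qfam_le:
  assumes "finite Q"
  shows "card (Qfam y \<rho> l1 \<gamma> E Q) \<le> 1 + card Q + 2 * (card Q * nat (cmax \<rho> l1 E - 1))"
proof -
  define C where "C = {2..cmax \<rho> l1 E}"
  define A where "A = Aset y \<rho> l1 E Q ` Q"
  define Lf where "Lf = (\<lambda>(j, c). Qleft y \<rho> l1 E Q j c) ` (Q \<times> C)"
  define Rf where "Rf = (\<lambda>(j, c). Qright y \<rho> l1 E Q j c) ` (Q \<times> C)"
  have fin: "finite (Q \<times> C)" using assms by (simp add: C_def)
  have "card (Qfam y \<rho> l1 \<gamma> E Q) \<le> card ({Q} \<union> A \<union> Lf \<union> Rf)"
    using assms fin by (intro card_mono) (auto simp: Qfam_def A_def Lf_def Rf_def C_def)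
  also have "\<dots> \<le> 1 + card A + card Lf + card Rf"
    using card_Un_le[of "{Q} \<union> A \<union> Lf" Rf] card_Un_le[of "{Q} \<union> A" Lf] card_Un_le[of "{Q}" A]
    by simp
  also have "\<dots> \<le> 1 + card Q + card (Q \<times> C) + card (Q \<times> C)"
    unfolding A_def Lf_def Rf_def
    using card_image_le[OF assms] card_image_le[OF fin] by (intro add_mono) auto
  finally show ?thesis by (simp add: C_def card_cartesian_product)
qed

lemma cmax_le_card:
  assumes "1 / 2 \<le> \<rho>" "0 \<le> l1" "l1 \<le> 1"
  shows "cmax \<rho> l1 E \<le> int (card E) + 1"
proof -
  have "sqrt (l1 * real (card E)) \<le> sqrt (real (card E))"
    using assms by (intro real_sqrt_le_mono) (simp add: mult_left_le_one_le)
  also have "\<dots> \<le> real (card E)"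
  proof (cases "card E = 0")
    case False
    then have "sqrt (card E) * 1 \<le> sqrt (card E) * sqrt (card E)"
      by (intro mult_left_mono) auto
    then show ?thesis by simp
  qed simp
  finally have "sqrt (l1 * real (card E)) / (2 * \<rho>) \<le> real (card E)"
    using assms mult_left_mono[of 1 "2 * \<rho>" "real (card E)"] by (simp add: divide_le_eq)
  then show ?thesis unfolding cmax_def by (simp add: ceiling_le_iff)
qed

lemma pred_Qfam_mem:
  fixes y :: "'b \<Rightarrow> nat \<Rightarrow> nat \<Rightarrow> real"
  assumes "finite E" "finite Q" and y: "\<And>i j. (\<lambda>x. y x i j) \<in> borel_measurable Mx"
  shows "{x \<in> space Mx. S \<in> Qfam (y x) \<rho> l1 \<gamma> E Q} \<in> sets Mx"
proof -
  have [measurable]: "(\<lambda>x. ybar (y x) E j) \<in> borel_measurable Mx" for j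
    unfolding ybar_def using y by measurable
  have filter_eq: "S = {j'\<in>Q. R j'} \<longleftrightarrow> S \<subseteq> Q \<and> (\<forall>j'\<in>Q. j' \<in> S \<longleftrightarrow> R j')" for R
    by auto
  have "{x \<in> space Mx. S \<in> Qfam (y x) \<rho> l1 \<gamma> E Q} = {x \<in> space Mx. \<gamma> \<le> real (card S) \<and>
    (S = Q \<or> (\<exists>j\<in>Q. S \<subseteq> Q \<and> (\<forall>j'\<in>Q. j' \<in> S \<longleftrightarrow> \<bar>ybar (y x) E j' - ybar (y x) E j\<bar> \<le> tau \<rho> l1 E)) \<or>
     (\<exists>j\<in>Q. \<exists>c\<in>{2..cmax \<rho> l1 E}. S \<subseteq> Q \<and> (\<forall>j'\<in>Q. j' \<in> S \<longleftrightarrow> tau \<rho> l1 E < ybar (y x) E j' - ybar (y x) E j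
        \<and> ybar (y x) E j' - ybar (y x) E j \<le> real_of_int c * tau \<rho> l1 E)) \<or>
     (\<exists>j\<in>Q. \<exists>c\<in>{2..cmax \<rho> l1 E}. S \<subseteq> Q \<and> (\<forall>j'\<in>Q. j' \<in> S \<longleftrightarrow> tau \<rho> l1 E < ybar (y x) E j - ybar (y x) E j'
        \<and> ybar (y x) E j - ybar (y x) E j' \<le> real_of_int c * tau \<rho> l1 E)))}"
    unfolding mem_Qfam_iff Aset_def Qleft_def Qright_def filter_eq by blast
  also have "\<dots> \<in> sets Mx"
    using assms by measurable
  finally show ?thesis .
qed

lemma median_separates:
  fixes \<pi> :: "nat \<Rightarrow> nat" and Gt :: "nat \<Rightarrow> nat \<Rightarrow> bool"
  assumes fin: "finite E" and ibar: "ibar \<in> E"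
    and median: "card {i'\<in>E. \<pi> i' \<le> \<pi> ibar} = nat \<lceil>real (card E) / 2\<rceil>"
    and consistent: "\<forall>i\<in>E. \<forall>i'\<in>E. Gt i i' \<longrightarrow> \<pi> i < \<pi> i'"
  shows "(\<forall>iO\<in>Oset Gt E. \<pi> iO < \<pi> ibar) \<and> (\<forall>iI\<in>Iset Gt E. \<pi> ibar < \<pi> iI)"
proof -
  define Lo where "Lo = {i'\<in>E. \<pi> i' \<le> \<pi> ibar}"
  have Lo: "Lo \<subseteq> E" "finite Lo" "ibar \<in> Lo" using fin ibar by (auto simp: Lo_def)
  have card_Lo: "real (card E) / 2 \<le> real (card Lo)" "real (card Lo) < real (card E) / 2 + 1"
    using median ceiling_correct[of "real (card E) / 2"] unfolding Lo_def by linarith+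
  show ?thesis
  proof safe
    fix iO assume "iO \<in> Oset Gt E"
    then have iO: "iO \<in> E" "real (card E) / 2 < real (card {i'\<in>E. Gt iO i'})"
      by (auto simp: Oset_def)
    show "\<pi> iO < \<pi> ibar"
    proof (rule ccontr)
      assume "\<not> \<pi> iO < \<pi> ibar"
      then have "{i'\<in>E. Gt iO i'} \<subseteq> E - Lo" using consistent iO by (fastforce simp: Lo_def)
      then have "card {i'\<in>E. Gt iO i'} \<le> card E - card Lo"
        using fin Lo card_mono[of "E - Lo"] card_Diff_subset[of Lo E] by simp
      then show False using iO(2) card_Lo card_mono[OF fin Lo(1)] by linarith
    qed
  next
    fix iI assume "iI \<in> Iset Gt E"
    then have iI: "iI \<in> E" "real (card E) / 2 < real (card {i'\<in>E. Gt i' iI})"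
      by (auto simp: Iset_def)
    show "\<pi> ibar < \<pi> iI"
    proof (rule ccontr)
      assume "\<not> \<pi> ibar < \<pi> iI"
      then have "{i'\<in>E. Gt i' iI} \<subseteq> Lo - {ibar}" using consistent iI by (fastforce simp: Lo_def)
      then have "card {i'\<in>E. Gt i' iI} \<le> card Lo - 1"
        using Lo card_mono[of "Lo - {ibar}"] by simp
      then show False using iI(2) card_Lo Lo card_gt_0_iff[of Lo] by linarith
    qed
  qed
qed

section \<open>The observation model\<close>

lemma (in prob_space) sum_prob_le_of_card_le:
  assumes I: "finite I" and A: "\<And>i. i \<in> I \<Longrightarrow> A i \<in> events"
    and K: "\<And>\<omega>. \<omega> \<in> space M \<Longrightarrow> real (card {i\<in>I. \<omega> \<in> A i}) \<le> K"
  shows "(\<Sum>i\<in>I. prob (A i)) \<le> K"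
proof -
  have "(\<Sum>i\<in>I. prob (A i)) = (\<integral>\<omega>. (\<Sum>i\<in>I. indicator (A i) \<omega>) \<partial>M)"
    using A by (simp add: Bochner_Integration.integral_sum emeasure_eq_measure)
  also have "\<dots> \<le> (\<integral>\<omega>. K \<partial>M)"
  proof (rule integral_mono)
    show "integrable M (\<lambda>\<omega>. \<Sum>i\<in>I. indicator (A i) \<omega> :: real)"
      using A by (auto simp: emeasure_eq_measure intro!: Bochner_Integration.integrable_sum integrable_real_indicator)
    show "(\<Sum>i\<in>I. indicator (A i) \<omega>) \<le> K" if "\<omega> \<in> space M" for \<omega>
      using K[OF that] I by (simp add: indicator_def sum.If_cases Int_def)
  qed simp
  finally show ?thesis by (simp add: prob_space)
qed

text \<open>\<open>Inl (c, i, j)\<close> indexes the count \<open>N c i j\<close> and \<open>Inr (c, i, j, k)\<close> the noise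
  \<open>W c i j k\<close>, as in the independence hypothesis of the theorem.\<close>

type_synonym sample_index = "(bool \<times> nat \<times> nat) + (bool \<times> nat \<times> nat \<times> nat)"

definition sample ::
    "(bool \<Rightarrow> nat \<Rightarrow> nat \<Rightarrow> 'a \<Rightarrow> nat) \<Rightarrow> (bool \<Rightarrow> nat \<Rightarrow> nat \<Rightarrow> nat \<Rightarrow> 'a \<Rightarrow> real) \<Rightarrow> sample_index \<Rightarrow> 'a \<Rightarrow> real" where
  "sample N W = (\<lambda>x. case x of Inl (c, i, j) \<Rightarrow> (\<lambda>\<omega>. real (N c i j \<omega>)) | Inr (c, i, j, k) \<Rightarrow> W c i j k)"

definition sample_indices :: "nat \<Rightarrow> nat \<Rightarrow> sample_index set" where
  "sample_indices n d = {Inl (c, i, j) | c i j. i < n \<and> j < d} \<union> {Inr (c, i, j, k) | c i j k. i < n \<and> j < d}"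

definition cell_indices :: "bool \<Rightarrow> nat \<Rightarrow> nat \<Rightarrow> sample_index set" where
  "cell_indices c i j = insert (Inl (c, i, j)) (range (\<lambda>k. Inr (c, i, j, k)))"

definition copy_a_indices :: "nat \<Rightarrow> nat \<Rightarrow> sample_index set" where
  "copy_a_indices n d = {x \<in> sample_indices n d. case x of Inl (c, _, _) \<Rightarrow> c | Inr (c, _, _, _) \<Rightarrow> c}"

definition cell_obs :: "(nat \<Rightarrow> nat \<Rightarrow> real) \<Rightarrow> bool \<Rightarrow> nat \<Rightarrow> nat \<Rightarrow> (sample_index \<Rightarrow> real) \<Rightarrow> real" where
  "cell_obs M c i j v = obs M (nat \<lfloor>v (Inl (c, i, j))\<rfloor>) (\<lambda>k. v (Inr (c, i, j, k))) i j"

definition observation ::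
    "(nat \<Rightarrow> nat \<Rightarrow> real) \<Rightarrow> (bool \<Rightarrow> nat \<Rightarrow> nat \<Rightarrow> 'a \<Rightarrow> nat) \<Rightarrow> (bool \<Rightarrow> nat \<Rightarrow> nat \<Rightarrow> nat \<Rightarrow> 'a \<Rightarrow> real)
      \<Rightarrow> bool \<Rightarrow> nat \<Rightarrow> nat \<Rightarrow> 'a \<Rightarrow> real" where
  "observation M N W c i j \<omega> = obs M (N c i j \<omega>) (\<lambda>k. W c i j k \<omega>) i j"

lemma cell_indices_subset: "i < n \<Longrightarrow> j < d \<Longrightarrow> cell_indices c i j \<subseteq> sample_indices n d"
  unfolding cell_indices_def sample_indices_def by auto

lemma cell_indices_subset_copy_a: "i < n \<Longrightarrow> j < d \<Longrightarrow> cell_indices True i j \<subseteq> copy_a_indices n d"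
  unfolding cell_indices_def copy_a_indices_def sample_indices_def by auto

lemma obs_measurable:
  assumes f: "f \<in> measurable Mx (count_space UNIV)" and w: "\<And>k. w k \<in> borel_measurable Mx"
  shows "(\<lambda>x. obs M (f x) (\<lambda>k. w k x) i j) \<in> borel_measurable Mx"
proof (rule measurable_compose_countable[where f="\<lambda>m x. obs M m (\<lambda>k. w k x) i j", OF _ f])
  show "(\<lambda>x. obs M m (\<lambda>k. w k x) i j) \<in> borel_measurable Mx" for m
    unfolding obs_def using w by measurable
qed

lemma cell_obs_measurable:
  assumes "cell_indices c i j \<subseteq> K"
  shows "cell_obs M c i j \<in> borel_measurable (PiM K (\<lambda>_. borel))"
proof -
  have "(\<lambda>v. v x) \<in> borel_measurable (PiM K (\<lambda>_. borel :: real measure))" if "x \<in> cell_indices c i j" for x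
    using assms that by (intro measurable_component_singleton) auto
  then have count: "(\<lambda>v. v (Inl (c, i, j))) \<in> borel_measurable (PiM K (\<lambda>_. borel :: real measure))"
    and noise: "(\<lambda>v. v (Inr (c, i, j, k))) \<in> borel_measurable (PiM K (\<lambda>_. borel :: real measure))" for k
    by (auto simp: cell_indices_def)
  have "(\<lambda>v. nat \<lfloor>v (Inl (c, i, j)) :: real\<rfloor>) \<in> measurable (PiM K (\<lambda>_. borel)) (count_space UNIV)"
    using count by measurable
  then show ?thesis
    unfolding cell_obs_def[abs_def] by (rule obs_measurable[OF _ noise])
qed

lemma cell_obs_restrict_sample:
  assumes "cell_indices c i j \<subseteq> K"
  shows "cell_obs M c i j (restrict (\<lambda>x. sample N W x \<omega>) K) = observation M N W c i j \<omega>"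
proof -
  have "Inl (c, i, j) \<in> K" "Inr (c, i, j, k) \<in> K" for k
    using assms by (auto simp: cell_indices_def)
  then show ?thesis by (simp add: cell_obs_def observation_def sample_def)
qed

lemma exp_obs_eq:
  assumes "0 < m"
  shows "exp (t * obs M m w i j) = exp (t * M i j) * (\<Prod>k<m. exp (t / m * w k))"
  using assms by (simp add: obs_def exp_add[symmetric] exp_sum[symmetric] sum.distrib sum_distrib_left
      sum_divide_distrib field_simps)

locale observation_model = prob_space P for P :: "'a measure" +
  fixes n d :: nat and M :: "nat \<Rightarrow> nat \<Rightarrow> real" and \<sigma> \<mu> :: real
    and N :: "bool \<Rightarrow> nat \<Rightarrow> nat \<Rightarrow> 'a \<Rightarrow> nat"
    and W :: "bool \<Rightarrow> nat \<Rightarrow> nat \<Rightarrow> nat \<Rightarrow> 'a \<Rightarrow> real"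
  assumes sigma_pos: "0 < \<sigma>" and mu_pos: "0 < \<mu>"
    and N_measurable: "\<And>c i j. N c i j \<in> measurable P (count_space UNIV)"
    and N_poisson: "\<And>c i j. i < n \<Longrightarrow> j < d \<Longrightarrow> distr P (count_space UNIV) (N c i j) = measure_pmf (poisson_pmf \<mu>)"
    and W_subGaussian: "\<And>c i j k. i < n \<Longrightarrow> j < d \<Longrightarrow> subGaussian P \<sigma> (W c i j k)"
    and indep: "indep_vars (\<lambda>_. borel) (sample N W) (sample_indices n d)"
begin

abbreviation Y :: "bool \<Rightarrow> nat \<Rightarrow> nat \<Rightarrow> 'a \<Rightarrow> real" where
  "Y \<equiv> observation M N W"

abbreviation copy_a :: "'a \<Rightarrow> sample_index \<Rightarrow> real" where
  "copy_a \<omega> \<equiv> restrict (\<lambda>x. sample N W x \<omega>) (copy_a_indices n d)"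

lemma W_measurable: "i < n \<Longrightarrow> j < d \<Longrightarrow> W c i j k \<in> borel_measurable P"
  using W_subGaussian by (auto simp: subGaussian_def intro: borel_measurable_integrable)

lemma Y_measurable: "i < n \<Longrightarrow> j < d \<Longrightarrow> Y c i j \<in> borel_measurable P"
  unfolding observation_def[abs_def] using N_measurable W_measurable by (intro obs_measurable) auto

lemma copy_a_measurable: "copy_a \<in> measurable P (PiM (copy_a_indices n d) (\<lambda>_. borel))"
  using indep by (intro measurable_restrict) (auto simp: indep_vars_def copy_a_indices_def)

lemma sets_copy_a_vimage:
  "C \<in> sets (PiM (copy_a_indices n d) (\<lambda>_. borel)) \<Longrightarrow> {\<omega> \<in> space P. copy_a \<omega> \<in> C} \<in> sets P"
  using measurable_sets[OF copy_a_measurable] by (simp add: vimage_def Int_def conj_commute)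

lemma sets_N_eq: "{\<omega> \<in> space P. N c i j \<omega> = m} \<in> sets P"
  using measurable_sets[OF N_measurable, of "{m}"] by (simp add: vimage_def Int_def conj_commute)

lemma emeasure_N_eq_0:
  assumes "i < n" "j < d"
  shows "emeasure P {\<omega>\<in>space P. N c i j \<omega> = 0} = ennreal (exp (- \<mu>))"
proof -
  have "emeasure P {\<omega>\<in>space P. N c i j \<omega> = 0} = emeasure (distr P (count_space UNIV) (N c i j)) {0}"
    by (subst emeasure_distr[OF N_measurable]) (auto intro!: arg_cong[where f="emeasure P"])
  also have "\<dots> = ennreal (exp (- \<mu>))"
    using N_poisson assms mu_pos by (simp add: emeasure_pmf_single)
  finally show ?thesis .
qed

lemma nn_integral_exp_W_le:
  assumes "i < n" "j < d"
  shows "(\<integral>\<^sup>+\<omega>. ennreal (exp (r * W c i j k \<omega>)) \<partial>P) \<le> ennreal (exp (r\<^sup>2 * \<sigma>\<^sup>2 / 2))"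
proof -
  have "integrable P (\<lambda>\<omega>. exp (r * W c i j k \<omega>))" "(\<integral>\<omega>. exp (r * W c i j k \<omega>) \<partial>P) \<le> exp (r\<^sup>2 * \<sigma>\<^sup>2 / 2)"
    using W_subGaussian[OF assms] by (auto simp: subGaussian_def)
  then show ?thesis by (simp add: nn_integral_eq_integral ennreal_leI)
qed

lemma prod_nn_integral_exp_W_le:
  assumes "i < n" "j < d" "0 < m"
  shows "(\<Prod>k<m. \<integral>\<^sup>+\<omega>. ennreal (exp (t / m * W c i j k \<omega>)) \<partial>P) \<le> ennreal (exp (t\<^sup>2 * \<sigma>\<^sup>2 / 2))"
proof -
  have "(\<Prod>k<m. \<integral>\<^sup>+\<omega>. ennreal (exp (t / m * W c i j k \<omega>)) \<partial>P) \<le> (\<Prod>k<m. ennreal (exp ((t / m)\<^sup>2 * \<sigma>\<^sup>2 / 2)))"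
    using assms by (intro prod_mono_ennreal nn_integral_exp_W_le)
  also have "\<dots> = ennreal (exp (t\<^sup>2 * \<sigma>\<^sup>2 / 2 / m))"
    using assms by (simp add: ennreal_power exp_of_nat_mult[symmetric] power_divide power2_eq_square field_simps
        del: exp_of_nat_mult)
  also have "\<dots> \<le> ennreal (exp (t\<^sup>2 * \<sigma>\<^sup>2 / 2))"
    using assms divide_left_mono[of 1 "real m" "t\<^sup>2 * \<sigma>\<^sup>2 / 2"] by (simp add: ennreal_leI)
  finally show ?thesis .
qed

lemma nn_integral_copy_a_indicator_prod:
  fixes F :: "(nat \<times> nat) set" and g :: "nat \<times> nat \<Rightarrow> real \<Rightarrow> ennreal"
  assumes F: "finite F" "F \<subseteq> {..<n} \<times> {..<d}"
    and g: "\<And>p. p \<in> F \<Longrightarrow> g p \<in> borel_measurable borel"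
    and C: "C \<in> sets (PiM (copy_a_indices n d) (\<lambda>_. borel))"
  shows "(\<integral>\<^sup>+\<omega>. indicator C (copy_a \<omega>) * (\<Prod>p\<in>F. g p (Y False (fst p) (snd p) \<omega>)) \<partial>P)
    = emeasure P {\<omega>\<in>space P. copy_a \<omega> \<in> C} * (\<Prod>p\<in>F. \<integral>\<^sup>+\<omega>. g p (Y False (fst p) (snd p) \<omega>) \<partial>P)"
proof -
  \<comment> \<open>\<open>None\<close> stands for all of copy (a), \<open>Some p\<close> for the cell \<open>p\<close> of copy (b).\<close>
  define I where "I = insert None (Some ` F)"
  define K where "K l = (case l of None \<Rightarrow> copy_a_indices n d | Some p \<Rightarrow> cell_indices False (fst p) (snd p))" for l
  define \<Phi> where "\<Phi> l = (case l of None \<Rightarrow> indicator C | Some p \<Rightarrow> (\<lambda>v. g p (cell_obs M False (fst p) (snd p) v)))" for l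
  define X where "X l \<omega> = \<Phi> l (restrict (\<lambda>x. sample N W x \<omega>) (K l))" for l \<omega>
  have K: "K l \<subseteq> sample_indices n d" if "l \<in> I" for l
    using that F(2) cell_indices_subset[of _ n _ d False] by (fastforce simp: I_def K_def copy_a_indices_def)
  have "disjoint_family_on K I"
    by (auto simp: disjoint_family_on_def I_def K_def copy_a_indices_def cell_indices_def)
  with K have "indep_vars (\<lambda>l. PiM (K l) (\<lambda>_. borel)) (\<lambda>l \<omega>. restrict (\<lambda>x. sample N W x \<omega>) (K l)) I"
    by (rule indep_vars_restrict[OF indep])
  moreover have "\<Phi> l \<in> borel_measurable (PiM (K l) (\<lambda>_. borel))" if "l \<in> I" for l
    using that C by (auto simp: I_def K_def \<Phi>_def intro!: measurable_compose[OF cell_obs_measurable g])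
  ultimately have "indep_vars (\<lambda>_. borel) X I"
    unfolding X_def by (rule indep_vars_compose2)
  then have "(\<integral>\<^sup>+\<omega>. (\<Prod>l\<in>I. X l \<omega>) \<partial>P) = (\<Prod>l\<in>I. \<integral>\<^sup>+\<omega>. X l \<omega> \<partial>P)"
    using F(1) by (intro indep_vars_nn_integral) (auto simp: I_def)
  moreover have "X (Some p) = (\<lambda>\<omega>. g p (Y False (fst p) (snd p) \<omega>))" for p
    by (simp add: fun_eq_iff X_def \<Phi>_def K_def cell_obs_restrict_sample cell_indices_def)
  moreover have "X None = (\<lambda>\<omega>. indicator C (copy_a \<omega>))"
    by (simp add: fun_eq_iff X_def \<Phi>_def K_def)
  moreover have "(\<integral>\<^sup>+\<omega>. indicator C (copy_a \<omega>) \<partial>P) = emeasure P {\<omega>\<in>space P. copy_a \<omega> \<in> C}"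
  proof -
    have "(\<integral>\<^sup>+\<omega>. indicator C (copy_a \<omega>) \<partial>P) = (\<integral>\<^sup>+\<omega>. indicator {\<omega>\<in>space P. copy_a \<omega> \<in> C} \<omega> \<partial>P)"
      by (intro nn_integral_cong) (simp add: indicator_def)
    then show ?thesis using sets_copy_a_vimage[OF C] by simp
  qed
  ultimately show ?thesis
    using F(1) by (simp add: I_def prod.reindex)
qed

lemma nn_integral_N_eq_exp_Y_le:
  assumes ij: "i < n" "j < d" and m: "0 < m"
  shows "(\<integral>\<^sup>+\<omega>. indicator {\<omega>\<in>space P. N c i j \<omega> = m} \<omega> * ennreal (exp (t * Y c i j \<omega>)) \<partial>P)
    \<le> emeasure P {\<omega>\<in>space P. N c i j \<omega> = m} * ennreal (exp (t * M i j + t\<^sup>2 * \<sigma>\<^sup>2 / 2))"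
proof -
  \<comment> \<open>On \<open>{N = m}\<close>, \<open>exp (t Y)\<close> is a product of functions of independent coordinates.\<close>
  define F where "F = insert (Inl (c, i, j)) ((\<lambda>k. Inr (c, i, j, k)) ` {..<m})"
  define \<phi> :: "sample_index \<Rightarrow> real \<Rightarrow> ennreal" where
    "\<phi> x r = (case x of Inl _ \<Rightarrow> ennreal (exp (t * M i j)) * indicator {real m} r
                      | Inr _ \<Rightarrow> ennreal (exp (t / m * r)))" for x r
  have prod_F: "(\<Prod>x\<in>F. f x) = f (Inl (c, i, j)) * (\<Prod>k<m. f (Inr (c, i, j, k)))" for f :: "_ \<Rightarrow> ennreal"
  proof -
    have "Inl (c, i, j) \<notin> (\<lambda>k. Inr (c, i, j, k)) ` {..<m}" "inj_on (\<lambda>k. Inr (c, i, j, k) :: sample_index) {..<m}"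
      by (auto simp: inj_on_def)
    then show ?thesis by (simp add: F_def prod.reindex)
  qed
  have "indep_vars (\<lambda>_. borel) (sample N W) F"
    using ij by (intro indep_vars_subset[OF indep]) (auto simp: F_def sample_indices_def)
  then have "indep_vars (\<lambda>_. borel) (\<lambda>x \<omega>. \<phi> x (sample N W x \<omega>)) F"
  proof (rule indep_vars_compose2)
    show "\<phi> x \<in> borel_measurable borel" for x
      by (cases x) (simp_all add: \<phi>_def[abs_def])
  qed
  then have factor: "(\<integral>\<^sup>+\<omega>. (\<Prod>x\<in>F. \<phi> x (sample N W x \<omega>)) \<partial>P) = (\<Prod>x\<in>F. \<integral>\<^sup>+\<omega>. \<phi> x (sample N W x \<omega>) \<partial>P)"
    by (intro indep_vars_nn_integral) (auto simp: F_def)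
  have "indicator {\<omega>\<in>space P. N c i j \<omega> = m} \<omega> * ennreal (exp (t * Y c i j \<omega>))
      \<le> (\<Prod>x\<in>F. \<phi> x (sample N W x \<omega>))" for \<omega>
    using m by (auto simp: prod_F \<phi>_def sample_def observation_def exp_obs_eq prod_ennreal ennreal_mult
        prod_nonneg indicator_def)
  then have "(\<integral>\<^sup>+\<omega>. indicator {\<omega>\<in>space P. N c i j \<omega> = m} \<omega> * ennreal (exp (t * Y c i j \<omega>)) \<partial>P)
      \<le> (\<Prod>x\<in>F. \<integral>\<^sup>+\<omega>. \<phi> x (sample N W x \<omega>) \<partial>P)"
    unfolding factor[symmetric] by (rule nn_integral_mono)
  also have "\<dots> = ennreal (exp (t * M i j)) * emeasure P {\<omega>\<in>space P. N c i j \<omega> = m}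
      * (\<Prod>k<m. \<integral>\<^sup>+\<omega>. ennreal (exp (t / m * W c i j k \<omega>)) \<partial>P)"
    using sets_N_eq[of c i j m]
    by (simp add: prod_F \<phi>_def sample_def nn_integral_cmult_indicator[symmetric] indicator_def
        cong: nn_integral_cong_simp)
  also have "\<dots> \<le> ennreal (exp (t * M i j)) * emeasure P {\<omega>\<in>space P. N c i j \<omega> = m}
      * ennreal (exp (t\<^sup>2 * \<sigma>\<^sup>2 / 2))"
    using prod_nn_integral_exp_W_le[OF ij m] by (intro mult_left_mono) auto
  finally show ?thesis
    by (simp add: exp_add ennreal_mult mult_ac)
qed

lemma suminf_emeasure_N_Suc:
  assumes "i < n" "j < d"
  shows "(\<Sum>m. emeasure P {\<omega>\<in>space P. N c i j \<omega> = Suc m}) = ennreal (lam1 \<mu>)"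
proof -
  define A where "A m = {\<omega>\<in>space P. N c i j \<omega> = m}" for m
  have "(\<Union>m. A (Suc m)) = space P - A 0"
    by (auto simp: A_def) (metis not0_implies_Suc)
  moreover have "disjoint_family (\<lambda>m. A (Suc m))"
    by (auto simp: disjoint_family_on_def A_def)
  moreover have "range (\<lambda>m. A (Suc m)) \<subseteq> sets P"
    by (auto simp: A_def sets_N_eq)
  ultimately have "(\<Sum>m. emeasure P (A (Suc m))) = emeasure P (space P) - emeasure P (A 0)"
    by (simp add: suminf_emeasure emeasure_compl A_def sets_N_eq)
  also have "\<dots> = ennreal (lam1 \<mu>)"
    using emeasure_N_eq_0[OF assms] by (simp add: A_def emeasure_space_1 lam1_def ennreal_minus flip: ennreal_1)
  finally show ?thesis by (simp add: A_def)
qed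

lemma nn_integral_exp_Y_le:
  assumes ij: "i < n" "j < d"
  shows "(\<integral>\<^sup>+\<omega>. ennreal (exp (t * Y c i j \<omega>)) \<partial>P)
    \<le> ennreal (1 + lam1 \<mu> * (exp (t * M i j + t\<^sup>2 * \<sigma>\<^sup>2 / 2) - 1))"
proof -
  define A where "A m = {\<omega>\<in>space P. N c i j \<omega> = m}" for m
  define C where "C = exp (t * M i j + t\<^sup>2 * \<sigma>\<^sup>2 / 2)"
  define f where "f \<omega> = ennreal (exp (t * Y c i j \<omega>))" for \<omega>
  have A[measurable]: "A m \<in> sets P" for m
    by (simp add: A_def sets_N_eq)
  have [measurable]: "Y c i j \<in> borel_measurable P"
    by (rule Y_measurable[OF ij])
  have f[measurable]: "f \<in> borel_measurable P"
    unfolding f_def[abs_def] by measurable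
  have split: "f \<omega> = indicator (A 0) \<omega> + (\<Sum>m. indicator (A (Suc m)) \<omega> * f \<omega>)" if "\<omega> \<in> space P" for \<omega>
  proof (cases "N c i j \<omega>")
    case 0
    then show ?thesis using that by (simp add: A_def f_def observation_def obs_def)
  next
    case (Suc m0)
    then have "(\<lambda>m. indicator (A (Suc m)) \<omega> * f \<omega>) = (\<lambda>m. if m = m0 then f \<omega> else 0)"
      using that by (auto simp: A_def)
    then show ?thesis
      using Suc sums_unique[OF sums_single[of m0 "\<lambda>_. f \<omega>"]] by (simp add: A_def)
  qed
  have suminf_eq: "(\<integral>\<^sup>+\<omega>. (\<Sum>m. indicator (A (Suc m)) \<omega> * f \<omega>) \<partial>P)
      = (\<Sum>m. \<integral>\<^sup>+\<omega>. indicator (A (Suc m)) \<omega> * f \<omega> \<partial>P)"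
    by (rule nn_integral_suminf) measurable
  have "(\<integral>\<^sup>+\<omega>. f \<omega> \<partial>P) = (\<integral>\<^sup>+\<omega>. indicator (A 0) \<omega> + (\<Sum>m. indicator (A (Suc m)) \<omega> * f \<omega>) \<partial>P)"
    by (rule nn_integral_cong) (rule split)
  also have "\<dots> = emeasure P (A 0) + (\<Sum>m. \<integral>\<^sup>+\<omega>. indicator (A (Suc m)) \<omega> * f \<omega> \<partial>P)"
    by (subst nn_integral_add) (simp_all add: suminf_eq del: ennreal_suminf_multc)
  also have "\<dots> \<le> emeasure P (A 0) + (\<Sum>m. emeasure P (A (Suc m)) * ennreal C)"
    unfolding A_def C_def f_def by (intro add_left_mono suminf_le nn_integral_N_eq_exp_Y_le ij) auto
  also have "\<dots> = ennreal (exp (- \<mu>)) + ennreal (lam1 \<mu>) * ennreal C"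
    using emeasure_N_eq_0[OF ij] suminf_emeasure_N_Suc[OF ij] by (simp add: A_def)
  also have "\<dots> = ennreal (1 + lam1 \<mu> * (C - 1))"
    using mu_pos by (simp add: lam1_def C_def ennreal_mult[symmetric] ennreal_plus[symmetric] algebra_simps
        del: ennreal_plus)
  finally show ?thesis by (simp add: f_def C_def)
qed

lemma nn_integral_copy_a_exp_diff_le:
  assumes ii: "i < n" "i' < n" "i \<noteq> i'" and S: "S \<subseteq> {..<d}"
    and C: "C \<in> sets (PiM (copy_a_indices n d) (\<lambda>_. borel))"
  shows "(\<integral>\<^sup>+\<omega>. indicator C (copy_a \<omega>) * ennreal (exp (s * (\<Sum>j\<in>S. Y False i j \<omega> - Y False i' j \<omega>))) \<partial>P)
    \<le> emeasure P {\<omega>\<in>space P. copy_a \<omega> \<in> C} *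
      (\<Prod>j\<in>S. ennreal (1 + lam1 \<mu> * (exp (s * M i j + s\<^sup>2 * \<sigma>\<^sup>2 / 2) - 1))
              * ennreal (1 + lam1 \<mu> * (exp ((- s) * M i' j + (- s)\<^sup>2 * \<sigma>\<^sup>2 / 2) - 1)))"
proof -
  define F where "F = {i, i'} \<times> S"
  define g where "g p r = ennreal (exp ((if fst p = i then s else - s) * r))" for p :: "nat \<times> nat" and r
  have fin: "finite F" "F \<subseteq> {..<n} \<times> {..<d}"
    using ii S finite_subset[OF S] by (auto simp: F_def)
  have prod_F: "(\<Prod>p\<in>F. f p) = (\<Prod>j\<in>S. f (i, j) * f (i', j))" for f :: "nat \<times> nat \<Rightarrow> ennreal"
  proof -
    have "(\<Prod>p\<in>F. f p) = (\<Prod>a\<in>{i, i'}. \<Prod>j\<in>S. f (a, j))"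
      unfolding F_def by (simp add: prod.cartesian_product)
    then show ?thesis using ii by (simp add: prod.distrib)
  qed
  have "ennreal (exp (s * (\<Sum>j\<in>S. Y False i j \<omega> - Y False i' j \<omega>)))
      = (\<Prod>p\<in>F. g p (Y False (fst p) (snd p) \<omega>))" for \<omega>
    using ii finite_subset[OF S] by (simp add: prod_F g_def prod_ennreal ennreal_mult[symmetric] exp_sum
        exp_add[symmetric] sum_distrib_left algebra_simps)
  then have "(\<integral>\<^sup>+\<omega>. indicator C (copy_a \<omega>) * ennreal (exp (s * (\<Sum>j\<in>S. Y False i j \<omega> - Y False i' j \<omega>))) \<partial>P)
      = emeasure P {\<omega>\<in>space P. copy_a \<omega> \<in> C} * (\<Prod>p\<in>F. \<integral>\<^sup>+\<omega>. g p (Y False (fst p) (snd p) \<omega>) \<partial>P)"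
    using nn_integral_copy_a_indicator_prod[OF fin _ C, of g] by (simp add: g_def[abs_def])
  also have "\<dots> \<le> emeasure P {\<omega>\<in>space P. copy_a \<omega> \<in> C} *
      (\<Prod>j\<in>S. ennreal (1 + lam1 \<mu> * (exp (s * M i j + s\<^sup>2 * \<sigma>\<^sup>2 / 2) - 1))
              * ennreal (1 + lam1 \<mu> * (exp ((- s) * M i' j + (- s)\<^sup>2 * \<sigma>\<^sup>2 / 2) - 1)))"
  proof -
    have "(\<integral>\<^sup>+\<omega>. g (i, j) (Y False i j \<omega>) \<partial>P) \<le> ennreal (1 + lam1 \<mu> * (exp (s * M i j + s\<^sup>2 * \<sigma>\<^sup>2 / 2) - 1))"
      "(\<integral>\<^sup>+\<omega>. g (i', j) (Y False i' j \<omega>) \<partial>P) \<le> ennreal (1 + lam1 \<mu> * (exp ((- s) * M i' j + (- s)\<^sup>2 * \<sigma>\<^sup>2 / 2) - 1))"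
      if "j \<in> S" for j
      using ii S that nn_integral_exp_Y_le[where c=False and t=s] nn_integral_exp_Y_le[where c=False and t="- s"]
      by (auto simp: g_def)
    then show ?thesis
      unfolding prod_F by (intro mult_left_mono prod_mono_ennreal mult_mono) auto
  qed
  finally show ?thesis .
qed

lemma emeasure_diff_sum_gt_le:
  assumes ii: "i < n" "i' < n" "i \<noteq> i'" and S: "S \<subseteq> {..<d}" and s: "0 \<le> s"
    and C: "C \<in> sets (PiM (copy_a_indices n d) (\<lambda>_. borel))"
  shows "emeasure P ({\<omega>\<in>space P. T < (\<Sum>j\<in>S. Y False i j \<omega> - Y False i' j \<omega>)} \<inter> {\<omega>\<in>space P. copy_a \<omega> \<in> C})
    \<le> ennreal (exp (- (s * T))) * (emeasure P {\<omega>\<in>space P. copy_a \<omega> \<in> C} *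
      (\<Prod>j\<in>S. ennreal (1 + lam1 \<mu> * (exp (s * M i j + s\<^sup>2 * \<sigma>\<^sup>2 / 2) - 1))
              * ennreal (1 + lam1 \<mu> * (exp ((- s) * M i' j + (- s)\<^sup>2 * \<sigma>\<^sup>2 / 2) - 1))))"
proof -
  define D where "D \<omega> = (\<Sum>j\<in>S. Y False i j \<omega> - Y False i' j \<omega>)" for \<omega>
  define A where "A = {\<omega>\<in>space P. T < D \<omega>} \<inter> {\<omega>\<in>space P. copy_a \<omega> \<in> C}"
  have markov: "indicator A \<omega> \<le> ennreal (exp (- (s * T))) * (indicator C (copy_a \<omega>) * ennreal (exp (s * D \<omega>)))"
    for \<omega>
  proof (cases "\<omega> \<in> A")
    case True
    then have "1 \<le> exp (- (s * T)) * exp (s * D \<omega>)"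
      using s by (simp add: A_def exp_add[symmetric] mult_left_mono)
    then show ?thesis
      using True by (simp add: A_def ennreal_mult[symmetric] ennreal_leI)
  qed simp
  have [measurable]: "D \<in> borel_measurable P"
    using ii S unfolding D_def by (intro borel_measurable_sum borel_measurable_diff Y_measurable) auto
  note [measurable] = copy_a_measurable C sets_copy_a_vimage[OF C]
  have "emeasure P A = (\<integral>\<^sup>+\<omega>. indicator A \<omega> \<partial>P)"
    unfolding A_def by (intro nn_integral_indicator[symmetric]) measurable
  also have "\<dots> \<le> (\<integral>\<^sup>+\<omega>. ennreal (exp (- (s * T))) * (indicator C (copy_a \<omega>) * ennreal (exp (s * D \<omega>))) \<partial>P)"
    by (intro nn_integral_mono markov)
  also have "\<dots> = ennreal (exp (- (s * T))) * (\<integral>\<^sup>+\<omega>. indicator C (copy_a \<omega>) * ennreal (exp (s * D \<omega>)) \<partial>P)"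
    by (rule nn_integral_cmult) measurable
  finally show ?thesis
    unfolding A_def D_def
    by (rule order_trans[OF _ mult_left_mono[OF nn_integral_copy_a_exp_diff_le[OF ii S C]]]) simp
qed

lemma prob_diff_sum_gt_le:
  assumes ii: "i < n" "i' < n" "i \<noteq> i'" and S: "S \<subseteq> {..<d}"
    and M: "\<And>j. j \<in> S \<Longrightarrow> 0 \<le> M i j \<and> M i j \<le> M i' j \<and> M i' j \<le> 1"
    and L: "0 < L" and card_S: "gam L (lam1 \<mu>) \<le> real (card S)"
    and C: "C \<in> sets (PiM (copy_a_indices n d) (\<lambda>_. borel))"
  shows "prob ({\<omega>\<in>space P. 2 * rho \<sigma> L * sqrt (lam1 \<mu> * real (card S)) < (\<Sum>j\<in>S. Y False i j \<omega> - Y False i' j \<omega>)}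
      \<inter> {\<omega>\<in>space P. copy_a \<omega> \<in> C})
    \<le> exp (- 3 * L) * prob {\<omega>\<in>space P. copy_a \<omega> \<in> C}"
proof -
  define l where "l = lam1 \<mu>"
  define u where "u = l * real (card S)"
  define B where "B = {\<omega>\<in>space P. copy_a \<omega> \<in> C}"
  have l: "0 < l" "l \<le> 1"
    using mu_pos by (auto simp: l_def lam1_def)
  have "2 * L / (exp 1)\<^sup>2 = l * gam L l"
    using l by (simp add: gam_def)
  also have "\<dots> \<le> u"
    using card_S l by (simp add: u_def l_def)
  finally obtain x where x: "0 < x" "x \<le> 1" "6 * x\<^sup>2 * u - 2 * exp 1 * sqrt (8 * L) * x * sqrt u \<le> - 3 * L"
    using chernoff_exponent_choice[OF L] by blast
  define s where "s = x / max 1 \<sigma>"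
  have s: "0 \<le> s" "s \<le> x" "s * \<sigma> \<le> x"
    using x sigma_pos by (auto simp: s_def field_simps max_def)
  have "(\<Prod>j\<in>S. ennreal (1 + lam1 \<mu> * (exp (s * M i j + s\<^sup>2 * \<sigma>\<^sup>2 / 2) - 1))
      * ennreal (1 + lam1 \<mu> * (exp ((- s) * M i' j + (- s)\<^sup>2 * \<sigma>\<^sup>2 / 2) - 1)))
      \<le> ennreal (exp (6 * x\<^sup>2 * u))"
    unfolding u_def l_def using l s x sigma_pos M by (intro prod_mixture_mgf_le) (auto simp: l_def)
  then have "emeasure P ({\<omega>\<in>space P. 2 * rho \<sigma> L * sqrt u < (\<Sum>j\<in>S. Y False i j \<omega> - Y False i' j \<omega>)} \<inter> B)
      \<le> ennreal (exp (- (s * (2 * rho \<sigma> L * sqrt u)))) * (emeasure P B * ennreal (exp (6 * x\<^sup>2 * u)))"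
    unfolding B_def by (rule order_trans[OF emeasure_diff_sum_gt_le[OF ii S s(1) C] mult_left_mono[OF mult_left_mono]]) simp_all
  also have "s * (2 * rho \<sigma> L * sqrt u) = 2 * exp 1 * sqrt (8 * L) * x * sqrt u"
    by (simp add: s_def rho_def)
  also have "ennreal (exp (- (2 * exp 1 * sqrt (8 * L) * x * sqrt u))) * (emeasure P B * ennreal (exp (6 * x\<^sup>2 * u)))
      = ennreal (exp (6 * x\<^sup>2 * u - 2 * exp 1 * sqrt (8 * L) * x * sqrt u)) * emeasure P B"
    by (simp add: ennreal_mult[symmetric] exp_add[symmetric] mult_ac)
  also have "\<dots> \<le> ennreal (exp (- 3 * L)) * emeasure P B"
    using x(3) by (intro mult_right_mono ennreal_leI) auto
  finally show ?thesis
    unfolding B_def u_def l_def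
    by (simp add: emeasure_eq_measure ennreal_mult[symmetric] ennreal_le_iff)
qed

definition copy_a_obs :: "(sample_index \<Rightarrow> real) \<Rightarrow> nat \<Rightarrow> nat \<Rightarrow> real" where
  "copy_a_obs v i j = (if i < n \<and> j < d then cell_obs M True i j v else 0)"

lemma copy_a_obs_measurable: "(\<lambda>v. copy_a_obs v i j) \<in> borel_measurable (PiM (copy_a_indices n d) (\<lambda>_. borel))"
  using cell_obs_measurable[OF cell_indices_subset_copy_a, of i n j d M] by (cases "i < n \<and> j < d") (auto simp: copy_a_obs_def)

end

section \<open>One round of the update\<close>

locale ranking_round = observation_model +
  fixes \<pi> :: "nat \<Rightarrow> nat" and \<delta> :: real and E Q :: "nat set" and G :: "nat \<Rightarrow> nat \<Rightarrow> bool"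
  assumes nd: "2 \<le> max n d" and delta: "0 < \<delta>" "\<delta> < 1"
    and M_range: "\<And>i j. i < n \<Longrightarrow> j < d \<Longrightarrow> 0 \<le> M i j \<and> M i j \<le> 1"
    and M_rows: "\<And>i i' j. i < n \<Longrightarrow> i' < n \<Longrightarrow> j < d \<Longrightarrow> \<pi> i \<le> \<pi> i' \<Longrightarrow> M i' j \<le> M i j"
    and E_sub: "E \<subseteq> {..<n}" and Q_sub: "Q \<subseteq> {..<d}"
    and pi_inj: "inj_on \<pi> E"
    and G_consistent: "\<And>i i'. i \<in> E \<Longrightarrow> i' \<in> E \<Longrightarrow> G i i' \<Longrightarrow> \<pi> i < \<pi> i'"
begin

abbreviation L :: real where "L \<equiv> Lconst n d \<delta>"
abbreviation \<rho> :: real where "\<rho> \<equiv> rho \<sigma> L"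
abbreviation l1 :: real where "l1 \<equiv> lam1 \<mu>"
abbreviation \<gamma> :: real where "\<gamma> \<equiv> gam L l1"

definition Gtilde :: "'a \<Rightarrow> nat \<Rightarrow> nat \<Rightarrow> bool" where
  "Gtilde \<omega> = Gupd (\<lambda>i j. Y True i j \<omega>) (\<lambda>i j. Y False i j \<omega>) \<rho> l1 \<gamma> E Q G"

definition misordered :: "(nat \<times> nat) set" where
  "misordered = {(i, i') \<in> E \<times> E. \<pi> i' < \<pi> i}"

definition candidates :: "nat set set" where
  "candidates = {S. S \<subseteq> Q \<and> S \<noteq> {} \<and> \<gamma> \<le> real (card S)}"

definition selected :: "nat set \<Rightarrow> 'a set" where
  "selected S = {\<omega>\<in>space P. S \<in> Qfam (\<lambda>i j. Y True i j \<omega>) \<rho> l1 \<gamma> E Q}"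

definition test_fires :: "nat \<times> nat \<Rightarrow> nat set \<Rightarrow> 'a set" where
  "test_fires p S = {\<omega>\<in>space P. 2 * \<rho> * sqrt (l1 * real (card S)) < (\<Sum>j\<in>S. Y False (fst p) j \<omega> - Y False (snd p) j \<omega>)}"

definition bad :: "'a set" where
  "bad = (\<Union>p\<in>misordered. \<Union>S\<in>candidates. test_fires p S \<inter> selected S)"

lemma finite_E: "finite E" and finite_Q: "finite Q"
  using E_sub Q_sub by (auto intro: finite_subset)

lemma Gtilde_eq:
  "Gtilde \<omega> = Gupd (\<lambda>i j. obs M (N True i j \<omega>) (\<lambda>k. W True i j k \<omega>) i j)
     (\<lambda>i j. obs M (N False i j \<omega>) (\<lambda>k. W False i j k \<omega>) i j) \<rho> l1 \<gamma> E Q G"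
  by (simp add: Gtilde_def observation_def)

lemma selected_eq_vimage_copy_a:
  obtains C where "C \<in> sets (PiM (copy_a_indices n d) (\<lambda>_. borel))" "selected S = {\<omega>\<in>space P. copy_a \<omega> \<in> C}"
proof
  define C where "C = {v \<in> space (PiM (copy_a_indices n d) (\<lambda>_. borel)). S \<in> Qfam (copy_a_obs v) \<rho> l1 \<gamma> E Q}"
  show "C \<in> sets (PiM (copy_a_indices n d) (\<lambda>_. borel))"
    unfolding C_def using finite_E finite_Q copy_a_obs_measurable by (rule pred_Qfam_mem)
  have "Qfam (copy_a_obs (copy_a \<omega>)) \<rho> l1 \<gamma> E Q = Qfam (\<lambda>i j. Y True i j \<omega>) \<rho> l1 \<gamma> E Q" for \<omega>
    using E_sub Q_sub
    by (intro Qfam_cong) (auto simp: copy_a_obs_def cell_obs_restrict_sample cell_indices_subset_copy_a)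
  then show "selected S = {\<omega>\<in>space P. copy_a \<omega> \<in> C}"
    using measurable_space[OF copy_a_measurable] by (auto simp: selected_def C_def)
qed

lemma sets_selected: "selected S \<in> sets P"
proof -
  obtain C where "C \<in> sets (PiM (copy_a_indices n d) (\<lambda>_. borel))" "selected S = {\<omega>\<in>space P. copy_a \<omega> \<in> C}"
    by (rule selected_eq_vimage_copy_a)
  then show ?thesis by (simp add: sets_copy_a_vimage)
qed

lemma sets_test_fires:
  assumes "fst p \<in> E" "snd p \<in> E" "S \<subseteq> Q"
  shows "test_fires p S \<in> sets P"
proof -
  have "(\<lambda>\<omega>. \<Sum>j\<in>S. Y False (fst p) j \<omega> - Y False (snd p) j \<omega>) \<in> borel_measurable P"
    using assms E_sub Q_sub by (intro borel_measurable_sum borel_measurable_diff Y_measurable) auto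
  then show ?thesis unfolding test_fires_def by measurable
qed

lemma finite_misordered: "finite misordered"
  by (rule finite_subset[of _ "E \<times> E"]) (auto simp: misordered_def finite_E)

lemma finite_candidates: "finite candidates"
  by (rule finite_subset[of _ "Pow Q"]) (auto simp: candidates_def finite_Q)

lemma sets_bad: "bad \<in> sets P"
  unfolding bad_def using finite_misordered finite_candidates sets_test_fires sets_selected
  by (intro sets.finite_UN) (auto simp: misordered_def candidates_def)

lemma L_ge_1:
  assumes "E \<noteq> {}" "Q \<noteq> {}"
  shows "1 \<le> L"
  using assms E_sub Q_sub by (intro Lconst_ge_1 nd delta) (auto simp: Suc_le_eq)

lemma l1_pos: "0 < l1"
  using mu_pos by (simp add: lam1_def)

lemma Gtilde_iff:
  assumes "\<omega> \<in> space P"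
  shows "Gtilde \<omega> i i' \<longleftrightarrow> G i i' \<or> (i \<in> E \<and> i' \<in> E \<and> (\<exists>S\<in>Pow Q. \<omega> \<in> selected S \<inter> test_fires (i, i') S))"
proof -
  have "(2 * \<rho> * sqrt (l1 / real (card S)) < (1 / real (card S)) * (\<Sum>j\<in>S. Y False i j \<omega> - Y False i' j \<omega>))
      \<longleftrightarrow> \<omega> \<in> test_fires (i, i') S" if "S \<subseteq> Q" for S
  proof (cases "S = {}")
    case False
    then have "0 < card S"
      using that finite_Q by (auto simp: card_gt_0_iff intro: finite_subset)
    then show ?thesis
      using assms normalized_test_iff[of "card S" "2 * \<rho>" l1] by (simp add: test_fires_def)
  qed (simp add: test_fires_def) \<comment> \<open>for \<open>S = {}\<close> both tests fail, the normalized one since \<open>1/0 = 0\<close>\<close>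
  then show ?thesis
    using assms by (auto simp: Gtilde_def Gupd_def selected_def dest: Qfam_subset)
qed

lemma pred_Gtilde: "Measurable.pred P (\<lambda>\<omega>. Gtilde \<omega> i i')"
proof -
  have "{\<omega>\<in>space P. Gtilde \<omega> i i'} = (if G i i' then space P
      else if i \<in> E \<and> i' \<in> E then (\<Union>S\<in>Pow Q. selected S \<inter> test_fires (i, i') S) else {})"
    by (auto simp: Gtilde_iff selected_def)
  moreover have "(\<Union>S\<in>Pow Q. selected S \<inter> test_fires (i, i') S) \<in> sets P" if "i \<in> E" "i' \<in> E"
    using that finite_Q sets_selected sets_test_fires by (intro sets.finite_UN) auto
  ultimately show ?thesis
    by (simp add: pred_def)
qed

lemma sets_separated:
  "{\<omega>\<in>space P. (\<forall>iO\<in>Oset (Gtilde \<omega>) E. \<pi> iO < \<pi> ibar) \<and> (\<forall>iI\<in>Iset (Gtilde \<omega>) E. \<pi> ibar < \<pi> iI)} \<in> sets P"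
proof -
  have card_eq: "real (card {x\<in>E. R x}) = (\<Sum>x\<in>E. if R x then 1 else 0)" for R
    using finite_E by (simp add: sum.If_cases Int_def)
  note [measurable] = pred_Gtilde
  have "{\<omega>\<in>space P. (\<forall>iO\<in>Oset (Gtilde \<omega>) E. \<pi> iO < \<pi> ibar) \<and> (\<forall>iI\<in>Iset (Gtilde \<omega>) E. \<pi> ibar < \<pi> iI)}
    = {\<omega>\<in>space P. (\<forall>iO\<in>E. real (card E) / 2 < (\<Sum>i'\<in>E. if Gtilde \<omega> iO i' then 1 else 0) \<longrightarrow> \<pi> iO < \<pi> ibar)
      \<and> (\<forall>iI\<in>E. real (card E) / 2 < (\<Sum>i'\<in>E. if Gtilde \<omega> i' iI then 1 else 0) \<longrightarrow> \<pi> ibar < \<pi> iI)}"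
    unfolding Oset_def Iset_def card_eq[symmetric] by auto
  also have "\<dots> \<in> sets P"
    using finite_E by measurable
  finally show ?thesis .
qed

lemma Gtilde_consistent:
  assumes \<omega>: "\<omega> \<in> space P - bad" and i: "i \<in> E" "i' \<in> E" and Gt: "Gtilde \<omega> i i'"
  shows "\<pi> i < \<pi> i'"
proof (cases "G i i'")
  case False
  with Gt \<omega> obtain S where S: "S \<subseteq> Q" "\<omega> \<in> selected S" "\<omega> \<in> test_fires (i, i') S"
    by (auto simp: Gtilde_iff)
  then have "S \<noteq> {}"
    by (auto simp: test_fires_def)
  moreover have "\<gamma> \<le> real (card S)"
    using S(2) by (simp add: selected_def mem_Qfam_iff)
  ultimately have "S \<in> candidates"
    using S(1) by (simp add: candidates_def)
  then have "(i, i') \<notin> misordered"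
    using S \<omega> by (auto simp: bad_def)
  moreover have "i \<noteq> i'"
  proof
    have "E \<noteq> {}" "Q \<noteq> {}"
      using i S(1) \<open>S \<noteq> {}\<close> by auto
    then have "0 \<le> 2 * \<rho> * sqrt (l1 * real (card S))"
      using rho_ge_1[OF L_ge_1, of \<sigma>] l1_pos by simp
    moreover assume "i = i'"
    ultimately show False
      using S(3) by (simp add: test_fires_def)
  qed
  then have "\<pi> i \<noteq> \<pi> i'"
    using i pi_inj by (auto dest: inj_onD)
  ultimately show ?thesis
    using i by (auto simp: misordered_def)
qed (use G_consistent i in blast)

lemma prob_bad_le_sum:
  assumes "E \<noteq> {}" "Q \<noteq> {}"
  shows "prob bad \<le> real (card misordered) * exp (- 3 * L) * (\<Sum>S\<in>candidates. prob (selected S))"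
proof -
  have events: "test_fires p S \<inter> selected S \<in> sets P" if "p \<in> misordered" "S \<in> candidates" for p S
    using that sets_test_fires sets_selected by (auto simp: misordered_def candidates_def)
  have "prob bad \<le> (\<Sum>p\<in>misordered. prob (\<Union>S\<in>candidates. test_fires p S \<inter> selected S))"
    unfolding bad_def using finite_candidates events
    by (intro finite_measure_subadditive_finite finite_misordered) (auto intro!: sets.finite_UN)
  also have "\<dots> \<le> (\<Sum>p\<in>misordered. \<Sum>S\<in>candidates. prob (test_fires p S \<inter> selected S))"
    using finite_candidates events by (intro sum_mono finite_measure_subadditive_finite) auto
  also have "\<dots> \<le> (\<Sum>p\<in>misordered. \<Sum>S\<in>candidates. exp (- 3 * L) * prob (selected S))"
  proof (intro sum_mono)
    fix p S assume p: "p \<in> misordered" and S: "S \<in> candidates"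
    obtain i i' where p_eq: "p = (i, i')" and i: "i \<in> E" "i' \<in> E" "\<pi> i' < \<pi> i"
      using p by (auto simp: misordered_def)
    obtain C where C: "C \<in> sets (PiM (copy_a_indices n d) (\<lambda>_. borel))"
      "selected S = {\<omega>\<in>space P. copy_a \<omega> \<in> C}"
      by (rule selected_eq_vimage_copy_a)
    have S': "S \<subseteq> {..<d}" "S \<noteq> {}" "gam L (lam1 \<mu>) \<le> real (card S)"
      using S Q_sub by (auto simp: candidates_def)
    have "0 \<le> M i j \<and> M i j \<le> M i' j \<and> M i' j \<le> 1" if "j \<in> S" for j
      using i E_sub S' that M_range M_rows[of i' i j] by auto
    moreover have "0 < L"
      using L_ge_1 assms by simp
    moreover have "i < n" "i' < n" "i \<noteq> i'"
      using i E_sub by auto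
    ultimately show "prob (test_fires p S \<inter> selected S) \<le> exp (- 3 * L) * prob (selected S)"
      using prob_diff_sum_gt_le[OF _ _ _ S'(1) _ _ S'(3) C(1)] unfolding test_fires_def p_eq C(2) by simp
  qed
  also have "\<dots> = real (card misordered) * exp (- 3 * L) * (\<Sum>S\<in>candidates. prob (selected S))"
    by (simp add: sum_distrib_left mult.assoc)
  finally show ?thesis .
qed

lemma sum_prob_selected_le:
  "(\<Sum>S\<in>candidates. prob (selected S)) \<le> real (1 + card Q + 2 * (card Q * nat (cmax \<rho> l1 E - 1)))"
proof (rule sum_prob_le_of_card_le[OF finite_candidates sets_selected])
  fix \<omega>
  have "{S\<in>candidates. \<omega> \<in> selected S} \<subseteq> Qfam (\<lambda>i j. Y True i j \<omega>) \<rho> l1 \<gamma> E Q"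
    by (auto simp: selected_def)
  moreover have "finite (Qfam (\<lambda>i j. Y True i j \<omega>) \<rho> l1 \<gamma> E Q)"
    by (rule finite_subset[of _ "Pow Q"]) (auto dest: Qfam_subset simp: finite_Q)
  ultimately have "card {S\<in>candidates. \<omega> \<in> selected S} \<le> card (Qfam (\<lambda>i j. Y True i j \<omega>) \<rho> l1 \<gamma> E Q)"
    by (rule card_mono[rotated])
  also have "\<dots> \<le> 1 + card Q + 2 * (card Q * nat (cmax \<rho> l1 E - 1))"
    using finite_Q by (rule card_Qfam_le)
  finally show "real (card {S\<in>candidates. \<omega> \<in> selected S}) \<le> real (1 + card Q + 2 * (card Q * nat (cmax \<rho> l1 E - 1)))"
    by linarith
qed

lemma prob_bad_le: "prob bad \<le> real (card Q) * \<delta> / (12 * real_of_int \<lceil>log 2 (real (max n d))\<rceil> * real d)"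
proof (cases "E = {} \<or> Q = {}")
  case True
  then have "bad = {}" by (auto simp: bad_def misordered_def candidates_def)
  then show ?thesis using delta ceiling_log2_ge_1[OF nd] by simp
next
  case False
  then have nd1: "1 \<le> n" "1 \<le> d" and card_E: "card E \<le> n"
    using E_sub Q_sub card_mono[OF _ E_sub] by (auto simp: Suc_le_eq)
  have "card misordered \<le> card (E \<times> E)"
    using finite_E by (intro card_mono) (auto simp: misordered_def)
  also have "\<dots> \<le> n * n"
    using card_E by (simp add: card_cartesian_product mult_le_mono)
  finally have mis: "real (card misordered) \<le> real n ^ 2"
    by (simp add: power2_eq_square flip: of_nat_mult)
  have "nat (cmax \<rho> l1 E - 1) \<le> n"
    using cmax_le_card[of \<rho> l1 E] rho_ge_1[OF L_ge_1, of \<sigma>] l1_pos card_E False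
    by (simp add: lam1_def)
  then have "card Q * nat (cmax \<rho> l1 E - 1) \<le> card Q * n"
    by simp
  moreover have "1 \<le> card Q" "card Q \<le> card Q * n"
    using nd1 False finite_Q by (auto simp: Suc_le_eq card_gt_0_iff)
  moreover have "6 * n * card Q = 6 * (card Q * n)"
    by simp
  ultimately have "1 + card Q + 2 * (card Q * nat (cmax \<rho> l1 E - 1)) \<le> 6 * n * card Q"
    by linarith
  then have "real (1 + card Q + 2 * (card Q * nat (cmax \<rho> l1 E - 1))) \<le> real (6 * n * card Q)"
    by (rule of_nat_mono)
  then have sel: "(\<Sum>S\<in>candidates. prob (selected S)) \<le> 6 * real n * real (card Q)"
    using sum_prob_selected_le by simp
  have "prob bad \<le> real (card misordered) * exp (- 3 * L) * (\<Sum>S\<in>candidates. prob (selected S))"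
    using False by (intro prob_bad_le_sum) auto
  also have "\<dots> \<le> real (card Q) * \<delta> / (12 * real_of_int \<lceil>log 2 (real (max n d))\<rceil> * real d)"
    unfolding Lconst_def using nd1 nd delta mis sel
    by (intro union_bound_arith) (auto intro: ceiling_log2_ge_1 sum_nonneg)
  finally show ?thesis .
qed

theorem prob_separated_ge:
  assumes ibar: "ibar \<in> E" and median: "card {i'\<in>E. \<pi> i' \<le> \<pi> ibar} = nat \<lceil>real (card E) / 2\<rceil>"
  shows "1 - real (card Q) * \<delta> / (12 * real_of_int \<lceil>log 2 (real (max n d))\<rceil> * real d)
    \<le> prob {\<omega>\<in>space P. (\<forall>iO\<in>Oset (Gtilde \<omega>) E. \<pi> iO < \<pi> ibar) \<and> (\<forall>iI\<in>Iset (Gtilde \<omega>) E. \<pi> ibar < \<pi> iI)}"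
proof -
  have "space P - bad \<subseteq> {\<omega>\<in>space P. (\<forall>iO\<in>Oset (Gtilde \<omega>) E. \<pi> iO < \<pi> ibar) \<and> (\<forall>iI\<in>Iset (Gtilde \<omega>) E. \<pi> ibar < \<pi> iI)}"
    using median_separates[OF finite_E ibar median] Gtilde_consistent by blast
  then have "prob (space P - bad) \<le> prob {\<omega>\<in>space P. (\<forall>iO\<in>Oset (Gtilde \<omega>) E. \<pi> iO < \<pi> ibar) \<and> (\<forall>iI\<in>Iset (Gtilde \<omega>) E. \<pi> ibar < \<pi> iI)}"
    using sets_separated by (rule finite_measure_mono)
  moreover have "prob (space P - bad) = 1 - prob bad"
    using sets_bad by (rule prob_compl)
  ultimately show ?thesis
    using prob_bad_le by linarith
qed

end

theorem mainTheorem8: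
  fixes P :: "'a measure"
    and n d :: nat
    and \<pi> \<eta> :: "nat \<Rightarrow> nat"
    and M :: "nat \<Rightarrow> nat \<Rightarrow> real"
    and p h \<sigma> \<delta> \<mu> :: real
    and N :: "bool \<Rightarrow> nat \<Rightarrow> nat \<Rightarrow> 'a \<Rightarrow> nat"
    and W :: "bool \<Rightarrow> nat \<Rightarrow> nat \<Rightarrow> nat \<Rightarrow> 'a \<Rightarrow> real"
    and E Q :: "nat set"
    and G :: "nat \<Rightarrow> nat \<Rightarrow> bool"
    and ibar :: nat
  assumes prob: "prob_space P"
    and nd: "2 \<le> max n d"
    and pi_perm: "bij_betw \<pi> {..<n} {..<n}"
    and eta_perm: "bij_betw \<eta> {..<d} {..<d}"
    and M_range: "\<forall>i<n. \<forall>j<d. 0 \<le> M i j \<and> M i j \<le> 1"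
    and M_rows: "\<forall>i<n. \<forall>i'<n. \<forall>j<d. \<pi> i \<le> \<pi> i' \<longrightarrow> M i' j \<le> M i j"
    and M_cols: "\<forall>i<n. \<forall>j<d. \<forall>j'<d. \<eta> j \<le> \<eta> j' \<longrightarrow> M i j' \<le> M i j"
    and p_range: "0 \<le> p \<and> p \<le> 1"
    and h_range: "0 < h \<and> h \<le> 1"
    and sigma_pos: "0 < \<sigma>"
    and delta_range: "0 < \<delta> \<and> \<delta> < 1"
    and mu_pos: "0 < \<mu>"
    and N_meas: "\<forall>c i j. N c i j \<in> measurable P (count_space UNIV)"
    and N_pois: "\<forall>c. \<forall>i<n. \<forall>j<d.
        distr P (count_space UNIV) (N c i j) = measure_pmf (poisson_pmf \<mu>)"
    and W_subg: "\<forall>c. \<forall>i<n. \<forall>j<d. \<forall>k. subGaussian P \<sigma> (W c i j k)"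
    and indep: "prob_space.indep_vars P (\<lambda>_. borel)
        (\<lambda>x. case x of Inl (c, i, j) \<Rightarrow> (\<lambda>\<omega>. real (N c i j \<omega>))
                     | Inr (c, i, j, k) \<Rightarrow> W c i j k)
        ({Inl (c, i, j) | c i j. i < n \<and> j < d} \<union> {Inr (c, i, j, k) | c i j k. i < n \<and> j < d})"
    and E_sub: "E \<subseteq> {..<n}"
    and Q_sub: "Q \<subseteq> {..<d}"
    and Qstar_sub: "Qstar M d p h E \<subseteq> Q"
    and size: "lam1 \<mu> * real (min (card E) (card Q))
        \<ge> 4 * (rho \<sigma> (Lconst n d \<delta>))\<^sup>2 / h\<^sup>2"
    and G_consistent: "\<forall>i\<in>E. \<forall>i'\<in>E. G i i' \<longrightarrow> \<pi> i < \<pi> i'"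
    and ibar_E: "ibar \<in> E"
    and ibar_median: "card {i'\<in>E. \<pi> i' \<le> \<pi> ibar} = nat \<lceil>real (card E) / 2\<rceil>"
  shows "prob_space.prob P
     {\<omega> \<in> space P.
        let Gt = Gupd (\<lambda>i j. obs M (N True i j \<omega>) (\<lambda>k. W True i j k \<omega>) i j)
                      (\<lambda>i j. obs M (N False i j \<omega>) (\<lambda>k. W False i j k \<omega>) i j)
                      (rho \<sigma> (Lconst n d \<delta>)) (lam1 \<mu>)
                      (gam (Lconst n d \<delta>) (lam1 \<mu>)) E Q G
        in (\<forall>iO\<in>Oset Gt E. \<pi> iO < \<pi> ibar) \<and> (\<forall>iI\<in>Iset Gt E. \<pi> ibar < \<pi> iI)}
   \<ge> 1 - real (card Q) * \<delta> /
        (12 * real_of_int \<lceil>log 2 (real (max n d))\<rceil> * real d)"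
proof -
  have "inj_on \<pi> E"
    using inj_on_subset[OF bij_betw_imp_inj_on[OF pi_perm] E_sub] .
  then interpret ranking_round P n d M \<sigma> \<mu> N W \<pi> \<delta> E Q G
    using prob sigma_pos mu_pos N_meas N_pois W_subg indep nd delta_range M_range M_rows E_sub Q_sub G_consistent
    by (simp add: ranking_round_def ranking_round_axioms_def observation_model_def observation_model_axioms_def
        sample_def[abs_def] sample_indices_def)
  show ?thesis
    using prob_separated_ge[OF ibar_E ibar_median] by (simp add: Gtilde_eq Let_def)
qed

end
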